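(* Let $d\ge3$, $n\ge1$, $0\le c<\frac{1}{d(d-1)}$, and let $$\rho(c,0)=\Big(\frac1{2d}-\frac{d-1}2c\Big)\sum_{i=0}^{d-1}|ii\rangle\langle ii|+\frac1{d(d-1)}\sum_{i<j}|\psi^-_{ij}\rangle\langle\psi^-_{ij}|+c\sum_{i<j}|\psi^+_{ij}\rangle\langle\psi^+_{ij}|.$$ Then the null space of $(\rho(c,0)^{PT})^{\otimes n}$ contains no nonzero vector of Schmidt rank less than three of the form $$|\psi\rangle=\sum_{i_1,\dots,i_n=0}^{d-1}a_{i_1\dots i_n}|\Phi_{i_1}\rangle\otimes\cdots\otimes|\Phi_{i_n}\rangle,$$ where $|\Phi_k\rangle=\frac1{\sqrt d}\sum_{j=0}^{d-1}e^{2\pi ijk/d}|jj\rangle$.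
   Context: $|\psi^{\pm}_{ij}\rangle=\frac1{\sqrt2}(|ij\rangle\pm|ji\rangle)$, sums over $0\le i<j\le d-1$. $\rho^{PT}$ is the partial transpose on the second factor of $\mathbb{C}^d\otimes\mathbb{C}^d$. The $n$-fold tensor product acts on $(\mathbb{C}^d\otimes\mathbb{C}^d)^{\otimes n}$, regarded as a bipartite space $(\mathbb{C}^d)^{\otimes n}_A\otimes(\mathbb{C}^d)^{\otimes n}_B$ with the first factor of each copy belonging to $A$; Schmidt rank is with respect to this bipartition. *)

theory Defs
  imports Complex_Main
begin

text \<open>Vectors in C^d (x) C^d are functions nat => nat => complex (entry at |a b>),
operators are functions of (a,b) and (a',b'): entry <a b| M |a' b'>.\<close>

definition ket2 :: "nat \<Rightarrow> nat \<Rightarrow> nat \<Rightarrow> nat \<Rightarrow> complex" where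
  "ket2 i j = (\<lambda>a b. if a = i \<and> b = j then 1 else 0)"

definition psi_pm :: "complex \<Rightarrow> nat \<Rightarrow> nat \<Rightarrow> nat \<Rightarrow> nat \<Rightarrow> complex" where
  "psi_pm s i j = (\<lambda>a b. (ket2 i j a b + s * ket2 j i a b) / of_real (sqrt 2))"

definition proj :: "(nat \<Rightarrow> nat \<Rightarrow> complex) \<Rightarrow> nat \<Rightarrow> nat \<Rightarrow> nat \<Rightarrow> nat \<Rightarrow> complex" where
  "proj v = (\<lambda>a b a' b'. v a b * cnj (v a' b'))"

definition pairs_lt :: "nat \<Rightarrow> (nat \<times> nat) set" where
  "pairs_lt d = {(i, j). i < j \<and> j < d}"

definition rho :: "nat \<Rightarrow> real \<Rightarrow> nat \<Rightarrow> nat \<Rightarrow> nat \<Rightarrow> nat \<Rightarrow> complex" where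
  "rho d c = (\<lambda>a b a' b'.
     of_real (1 / (2 * real d) - (real d - 1) / 2 * c) * (\<Sum>i<d. proj (ket2 i i) a b a' b')
   + of_real (1 / (real d * (real d - 1))) * (\<Sum>(i,j)\<in>pairs_lt d. proj (psi_pm (-1) i j) a b a' b')
   + of_real c * (\<Sum>(i,j)\<in>pairs_lt d. proj (psi_pm 1 i j) a b a' b'))"

definition ptrans :: "(nat \<Rightarrow> nat \<Rightarrow> nat \<Rightarrow> nat \<Rightarrow> complex) \<Rightarrow> nat \<Rightarrow> nat \<Rightarrow> nat \<Rightarrow> nat \<Rightarrow> complex" where
  "ptrans M = (\<lambda>a b a' b'. M a b' a' b)"

text \<open>A vector of (C^d (x) C^d)^{(x) n}, viewed as (C^d)^{(x)n}_A (x) (C^d)^{(x)n}_B,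
is a function of the A-index list x and the B-index list y.\<close>
definition idx :: "nat \<Rightarrow> nat \<Rightarrow> nat list set" where
  "idx d n = {xs. length xs = n \<and> set xs \<subseteq> {..<d}}"

definition tpow_op :: "nat \<Rightarrow> (nat \<Rightarrow> nat \<Rightarrow> nat \<Rightarrow> nat \<Rightarrow> complex)
    \<Rightarrow> nat list \<Rightarrow> nat list \<Rightarrow> nat list \<Rightarrow> nat list \<Rightarrow> complex" where
  "tpow_op n M = (\<lambda>x y x' y'. \<Prod>k<n. M (x!k) (y!k) (x'!k) (y'!k))"

definition apply_op :: "nat \<Rightarrow> nat \<Rightarrow> (nat list \<Rightarrow> nat list \<Rightarrow> nat list \<Rightarrow> nat list \<Rightarrow> complex)
    \<Rightarrow> (nat list \<Rightarrow> nat list \<Rightarrow> complex) \<Rightarrow> nat list \<Rightarrow> nat list \<Rightarrow> complex" where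
  "apply_op d n T v = (\<lambda>x y. \<Sum>x'\<in>idx d n. \<Sum>y'\<in>idx d n. T x y x' y' * v x' y')"

definition in_null_space :: "nat \<Rightarrow> nat \<Rightarrow> (nat list \<Rightarrow> nat list \<Rightarrow> nat list \<Rightarrow> nat list \<Rightarrow> complex)
    \<Rightarrow> (nat list \<Rightarrow> nat list \<Rightarrow> complex) \<Rightarrow> bool" where
  "in_null_space d n T v \<longleftrightarrow> (\<forall>x\<in>idx d n. \<forall>y\<in>idx d n. apply_op d n T v x y = 0)"

definition nonzero_vec :: "nat \<Rightarrow> nat \<Rightarrow> (nat list \<Rightarrow> nat list \<Rightarrow> complex) \<Rightarrow> bool" where
  "nonzero_vec d n v \<longleftrightarrow> (\<exists>x\<in>idx d n. \<exists>y\<in>idx d n. v x y \<noteq> 0)"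

definition schmidt_rank :: "nat \<Rightarrow> nat \<Rightarrow> (nat list \<Rightarrow> nat list \<Rightarrow> complex) \<Rightarrow> nat" where
  "schmidt_rank d n v = (LEAST r. \<exists>u w :: nat \<Rightarrow> nat list \<Rightarrow> complex.
       \<forall>x\<in>idx d n. \<forall>y\<in>idx d n. v x y = (\<Sum>m<r. u m x * w m y))"

definition Phi :: "nat \<Rightarrow> nat \<Rightarrow> nat \<Rightarrow> nat \<Rightarrow> complex" where
  "Phi d k = (\<lambda>a b. if a = b \<and> a < d
      then exp (2 * of_real pi * \<i> * of_nat a * of_nat k / of_nat d) / of_real (sqrt (real d))
      else 0)"

definition phi_comb :: "nat \<Rightarrow> nat \<Rightarrow> (nat list \<Rightarrow> complex) \<Rightarrow> nat list \<Rightarrow> nat list \<Rightarrow> complex" where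
  "phi_comb d n coef = (\<lambda>x y. \<Sum>is\<in>idx d n. coef is * (\<Prod>k<n. Phi d (is!k) (x!k) (y!k)))"

end

theory Submission imports Defs begin

text \<open>Every \<open>|\<Phi>\<^sub>k\<rangle>\<close> lies in the span of the \<open>|jj\<rangle>\<close>, so \<open>\<psi>\<close>, read as a matrix from
\<open>A\<close> to \<open>B\<close>, is diagonal in the product basis, and Schmidt rank below three leaves at most two
nonzero diagonal entries \<open>\<psi>\<^sub>p\<^sub>p\<close>, \<open>\<psi>\<^sub>q\<^sub>q\<close>. On such vectors \<open>\<rho>\<^sup>P\<^sup>T\<close> acts only through the entries
\<open>\<langle>aa|\<rho>\<^sup>P\<^sup>T|a'a'\<rangle> = \<langle>aa'|\<rho>|a'a\<rangle>\<close>, which are \<open>\<alpha> = (d-1)(\<beta>-c)/2\<close> for \<open>a = a'\<close> and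
\<open>\<gamma> = (c-\<beta>)/2\<close> otherwise, where \<open>\<beta> = 1/(d(d-1))\<close>. For \<open>c < \<beta>\<close> and \<open>d \<ge> 3\<close> we have \<open>|\<gamma>| < \<alpha>\<close>, so in
the \<open>n\<close>-fold tensor power the diagonal entries \<open>\<alpha>\<^sup>n\<close> strictly dominate all others, and the
\<open>2 \<times> 2\<close> system for \<open>\<psi>\<^sub>p\<^sub>p\<close>, \<open>\<psi>\<^sub>q\<^sub>q\<close> has only the trivial solution.\<close>

lemma finite_idx: "finite (idx d n)"
proof -
  have "idx d n = {xs. set xs \<subseteq> {..<d} \<and> length xs = n}" by (auto simp: idx_def)
  then show ?thesis using finite_lists_length_eq[of "{..<d}" n] by simp
qed

lemma idx_nth_less: "xs \<in> idx d n \<Longrightarrow> k < n \<Longrightarrow> xs ! k < d"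
  unfolding idx_def using nth_mem by blast

lemma idx_neq_nth: "xs \<in> idx d n \<Longrightarrow> ys \<in> idx d n \<Longrightarrow> xs \<noteq> ys \<Longrightarrow> \<exists>k<n. xs ! k \<noteq> ys ! k"
  by (auto simp: idx_def list_eq_iff_nth_eq)

lemma schmidt_decomposition_exists:
  fixes v :: "nat list \<Rightarrow> nat list \<Rightarrow> complex"
  shows "\<exists>(r::nat) u w. \<forall>x\<in>idx d n. \<forall>y\<in>idx d n. v x y = (\<Sum>m<r. u m x * w m y)"
proof -
  obtain h where h: "bij_betw h {..<card (idx d n)} (idx d n)"
    using ex_bij_betw_nat_finite[OF finite_idx] by (auto simp: atLeast0LessThan)
  have "v x y = (\<Sum>m<card (idx d n). (if x = h m then 1 else 0) * v (h m) y)"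
    if "x \<in> idx d n" for x y
  proof -
    have "(\<Sum>m<card (idx d n). (if x = h m then 1 else 0) * v (h m) y)
        = (\<Sum>m<card (idx d n). (\<lambda>z. if x = z then v z y else 0) (h m))"
      by (rule sum.cong) auto
    also have "\<dots> = (\<Sum>z\<in>idx d n. if x = z then v z y else 0)"
      by (rule sum.reindex_bij_betw[OF h])
    also have "\<dots> = v x y" using that finite_idx by simp
    finally show ?thesis by simp
  qed
  then show ?thesis
    by (intro exI[of _ "card (idx d n)"] exI[of _ "\<lambda>m x. if x = h m then 1 else 0"]
        exI[of _ "\<lambda>m y. v (h m) y"]) auto
qed

lemma schmidt_rank_decomposition:
  obtains u w where
    "\<forall>x\<in>idx d n. \<forall>y\<in>idx d n. v x y = (\<Sum>m<schmidt_rank d n v. u m x * w m y)"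
  using LeastI_ex[OF schmidt_decomposition_exists[of d n v]] unfolding schmidt_rank_def by blast

lemma rank_two_diagonal_three_zero:
  fixes v :: "'a \<Rightarrow> 'a \<Rightarrow> 'b::comm_ring_1" and r :: nat
  assumes dec: "\<forall>x\<in>I. \<forall>y\<in>I. v x y = (\<Sum>m<r. u m x * w m y)" and "r \<le> 2"
    and diag: "\<forall>x\<in>I. \<forall>y\<in>I. x \<noteq> y \<longrightarrow> v x y = 0"
    and I: "p1 \<in> I" "p2 \<in> I" "p3 \<in> I" and distinct: "p1 \<noteq> p2" "p1 \<noteq> p3" "p2 \<noteq> p3"
  shows "v p1 p1 * v p2 p2 * v p3 p3 = 0"
proof -
  define f where "f m x = (if m < r then u m x else 0)" for m x
  have two_terms: "v x y = f 0 x * w 0 y + f 1 x * w 1 y" if "x \<in> I" "y \<in> I" for x y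
  proof -
    have "r = 0 \<or> r = 1 \<or> r = 2" using \<open>r \<le> 2\<close> by auto
    then show ?thesis using dec that by (auto simp: f_def numeral_2_eq_2)
  qed
  \<comment> \<open>the determinant of the rank-two matrix \<open>(v p\<^sub>i p\<^sub>j)\<close>\<close>
  have "v p1 p1 * v p2 p2 * v p3 p3 - v p1 p1 * v p2 p3 * v p3 p2
      - v p1 p2 * v p2 p1 * v p3 p3 + v p1 p2 * v p2 p3 * v p3 p1
      + v p1 p3 * v p2 p1 * v p3 p2 - v p1 p3 * v p2 p2 * v p3 p1 = 0"
    using I by (simp add: two_terms algebra_simps)
  then show ?thesis using diag I distinct by simp
qed

lemma prod_nth_dominant_strict:
  fixes g :: "'a \<Rightarrow> 'a \<Rightarrow> real"
  assumes dom: "\<And>a b. a \<noteq> b \<Longrightarrow> \<bar>g a b\<bar> < \<alpha>" and diag: "\<And>a. \<bar>g a a\<bar> \<le> \<alpha>"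
    and "k0 < n" "xs ! k0 \<noteq> ys ! k0"
  shows "\<bar>\<Prod>k<n. g (xs!k) (ys!k)\<bar> < \<alpha> ^ n"
proof -
  have le: "\<bar>g a b\<bar> \<le> \<alpha>" for a b using dom diag by (cases "a = b") (auto intro: less_imp_le)
  have "\<bar>\<Prod>k<n. g (xs!k) (ys!k)\<bar>
      = \<bar>g (xs!k0) (ys!k0)\<bar> * (\<Prod>k\<in>{..<n}-{k0}. \<bar>g (xs!k) (ys!k)\<bar>)"
    using \<open>k0 < n\<close> by (simp add: abs_mult abs_prod prod.remove)
  also have "\<dots> \<le> \<bar>g (xs!k0) (ys!k0)\<bar> * \<alpha> ^ (n - 1)"
    using prod_mono[of "{..<n}-{k0}" "\<lambda>k. \<bar>g (xs!k) (ys!k)\<bar>" "\<lambda>_. \<alpha>"] \<open>k0 < n\<close> le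
    by (intro mult_left_mono) auto
  also have "\<dots> < \<alpha> * \<alpha> ^ (n - 1)"
    using dom[OF \<open>xs ! k0 \<noteq> ys ! k0\<close>] by (intro mult_strict_right_mono) auto
  also have "\<dots> = \<alpha> ^ n" using \<open>k0 < n\<close> by (cases n) auto
  finally show ?thesis .
qed

lemma dominant_2x2_system_zero:
  fixes a b c :: real and x y :: complex
  assumes "\<bar>b\<bar> < a" "\<bar>c\<bar> < a"
    and eq1: "of_real a * x + of_real b * y = 0" and eq2: "of_real c * x + of_real a * y = 0"
  shows "x = 0"
proof -
  have "of_real (a * a - b * c) * x = of_real a * (of_real a * x + of_real b * y)
      - of_real b * (of_real c * x + of_real a * y)"
    by (simp add: algebra_simps)
  also have "\<dots> = 0" using eq1 eq2 by simp
  finally have "of_real (a * a - b * c) * x = 0" .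
  moreover have "\<bar>b * c\<bar> < a * a"
    using assms(1,2) by (simp add: abs_mult mult_strict_mono')
  then have "a * a - b * c \<noteq> 0" using abs_ge_self[of "b * c"] by linarith
  ultimately show ?thesis by (auto simp only: mult_eq_0_iff of_real_eq_0_iff)
qed

lemma dominant_system_sparse_solution_zero:
  fixes K :: "'a \<Rightarrow> 'a \<Rightarrow> real" and u :: "'a \<Rightarrow> complex"
  assumes "finite I" "p \<in> I" "\<alpha> > 0"
    and diag: "\<forall>x\<in>I. K x x = \<alpha>" and dom: "\<forall>x\<in>I. \<forall>y\<in>I. x \<noteq> y \<longrightarrow> \<bar>K x y\<bar> < \<alpha>"
    and solution: "\<forall>x\<in>I. (\<Sum>y\<in>I. of_real (K x y) * u y) = 0"
    and sparse: "\<forall>x\<in>I. \<forall>y\<in>I. \<forall>z\<in>I. x \<noteq> y \<and> x \<noteq> z \<and> y \<noteq> z \<longrightarrow> u x * u y * u z = 0"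
  shows "u p = 0"
proof (rule ccontr)
  assume "u p \<noteq> 0"
  obtain q where "q \<in> I" and support: "\<forall>s\<in>I. s \<noteq> p \<and> s \<noteq> q \<longrightarrow> u s = 0"
  proof (cases "\<exists>q\<in>I. q \<noteq> p \<and> u q \<noteq> 0")
    case True
    then obtain q where q: "q \<in> I" "q \<noteq> p" "u q \<noteq> 0" by blast
    have "u s = 0" if s: "s \<in> I" "s \<noteq> p" "s \<noteq> q" for s
    proof -
      have "u p * u q * u s = 0"
        using sparse[rule_format, OF \<open>p \<in> I\<close> q(1) s(1)] q(2) s(2,3) by auto
      then show ?thesis using \<open>u p \<noteq> 0\<close> q(3) by simp
    qed
    then show ?thesis using that[OF q(1)] by blast
  next
    case False
    then show ?thesis using that[OF \<open>p \<in> I\<close>] by blast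
  qed
  have reduced: "(\<Sum>y\<in>{p, q}. of_real (K x y) * u y) = 0" if "x \<in> I" for x
  proof -
    have "(\<Sum>y\<in>I. of_real (K x y) * u y) = (\<Sum>y\<in>{p, q}. of_real (K x y) * u y)"
      by (rule sum.mono_neutral_right) (use \<open>finite I\<close> \<open>p \<in> I\<close> \<open>q \<in> I\<close> support in auto)
    then show ?thesis using solution that by simp
  qed
  show False
  proof (cases "q = p")
    case True
    then show False using reduced[OF \<open>p \<in> I\<close>] diag \<open>p \<in> I\<close> \<open>\<alpha> > 0\<close> \<open>u p \<noteq> 0\<close> by simp
  next
    case False
    have "\<bar>K p q\<bar> < \<alpha>" "\<bar>K q p\<bar> < \<alpha>" using dom \<open>p \<in> I\<close> \<open>q \<in> I\<close> False by auto
    moreover have "of_real \<alpha> * u p + of_real (K p q) * u q = 0"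
      using reduced[OF \<open>p \<in> I\<close>] diag \<open>p \<in> I\<close> False by simp
    moreover have "of_real (K q p) * u p + of_real \<alpha> * u q = 0"
      using reduced[OF \<open>q \<in> I\<close>] diag \<open>q \<in> I\<close> False by simp
    ultimately have "u p = 0" by (rule dominant_2x2_system_zero)
    with \<open>u p \<noteq> 0\<close> show False ..
  qed
qed

definition rho_pt_weight :: "nat \<Rightarrow> real \<Rightarrow> nat \<Rightarrow> nat \<Rightarrow> real" where
  "rho_pt_weight d c a a' = (if a = a' then 1 / (2 * real d) - (real d - 1) / 2 * c
     else (c - 1 / (real d * (real d - 1))) / 2)"

lemma sum_proj_ket2_transposed:
  assumes "a < d" "a' < d"
  shows "(\<Sum>i<d. proj (ket2 i i) a a' a' a) = (if a = a' then 1 else 0)"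
proof -
  have "(\<Sum>i<d. proj (ket2 i i) a a' a' a) = (\<Sum>i<d. if i = a then (if a = a' then 1 else 0) else 0)"
    by (rule sum.cong) (auto simp: proj_def ket2_def)
  also have "\<dots> = (if a = a' then 1 else 0)" using assms by simp
  finally show ?thesis .
qed

lemma finite_pairs_lt: "finite (pairs_lt d)"
  by (rule finite_subset[of _ "{..<d} \<times> {..<d}"]) (auto simp: pairs_lt_def)

lemma proj_psi_pm_transposed:
  assumes "i < j" "cnj s = s"
  shows "proj (psi_pm s i j) a a' a' a
    = (if (i, j) = (min a a', max a a') \<and> a \<noteq> a' then s / 2 else 0)"
proof -
  have "complex_of_real (sqrt 2) * complex_of_real (sqrt 2) = 2"
    by (simp flip: of_real_mult)
  then show ?thesis
    using assms by (auto simp: proj_def psi_pm_def ket2_def min_def max_def)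
qed

lemma sum_proj_psi_pm_transposed:
  assumes "a < d" "a' < d" "cnj s = s"
  shows "(\<Sum>(i, j)\<in>pairs_lt d. proj (psi_pm s i j) a a' a' a) = (if a = a' then 0 else s / 2)"
proof -
  have "(\<Sum>(i, j)\<in>pairs_lt d. proj (psi_pm s i j) a a' a' a)
      = (\<Sum>ij\<in>pairs_lt d. if ij = (min a a', max a a') then (if a \<noteq> a' then s / 2 else 0) else 0)"
  proof (rule sum.cong)
    fix ij assume "ij \<in> pairs_lt d"
    then obtain i j where "ij = (i, j)" "i < j" by (auto simp: pairs_lt_def)
    then show "(case ij of (i, j) \<Rightarrow> proj (psi_pm s i j) a a' a' a)
        = (if ij = (min a a', max a a') then (if a \<noteq> a' then s / 2 else 0) else 0)"
      using proj_psi_pm_transposed[OF _ assms(3)] by auto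
  qed simp
  also have "\<dots> = (if a = a' then 0 else s / 2)"
    using assms finite_pairs_lt by (auto simp: pairs_lt_def min_def max_def)
  finally show ?thesis .
qed

lemma ptrans_rho_diagonal:
  assumes "a < d" "a' < d"
  shows "ptrans (rho d c) a a a' a' = of_real (rho_pt_weight d c a a')"
  using assms
  by (simp add: ptrans_def rho_def rho_pt_weight_def sum_proj_ket2_transposed
      sum_proj_psi_pm_transposed diff_divide_distrib)

lemma rho_pt_weight_dominant:
  assumes "d \<ge> 3" "c < 1 / (real d * (real d - 1))" "a \<noteq> a'"
  shows "\<bar>rho_pt_weight d c a a'\<bar> < rho_pt_weight d c b b"
proof -
  define \<beta> where "\<beta> = 1 / (real d * (real d - 1))"
  have "d > 1" using assms(1) by simp
  then have "1 / (2 * real d) = (real d - 1) * \<beta> / 2"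
    by (simp add: \<beta>_def field_simps)
  then have diag: "rho_pt_weight d c b b = (real d - 1) * ((\<beta> - c) / 2)"
    by (simp add: rho_pt_weight_def right_diff_distrib)
  have off: "\<bar>rho_pt_weight d c a a'\<bar> = (\<beta> - c) / 2"
    using assms by (simp add: rho_pt_weight_def \<beta>_def)
  have "(\<beta> - c) / 2 > 0" using assms(2) by (simp add: \<beta>_def)
  then have "(\<beta> - c) / 2 < (real d - 1) * ((\<beta> - c) / 2)"
    using mult_strict_right_mono[of 1 "real d - 1" "(\<beta> - c) / 2"] assms(1) by simp
  then show ?thesis using diag off by simp
qed

lemma rho_pt_weight_pos:
  assumes "d \<ge> 3" "c < 1 / (real d * (real d - 1))"
  shows "rho_pt_weight d c a a > 0"
  using rho_pt_weight_dominant[OF assms, of 0 1 a] by linarith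

definition rho_pt_kernel :: "nat \<Rightarrow> real \<Rightarrow> nat \<Rightarrow> nat list \<Rightarrow> nat list \<Rightarrow> real" where
  "rho_pt_kernel d c n x x' = (\<Prod>k<n. rho_pt_weight d c (x!k) (x'!k))"

lemma tpow_op_ptrans_rho_diagonal:
  assumes "x \<in> idx d n" "x' \<in> idx d n"
  shows "tpow_op n (ptrans (rho d c)) x x x' x' = of_real (rho_pt_kernel d c n x x')"
  using assms by (simp add: tpow_op_def rho_pt_kernel_def ptrans_rho_diagonal idx_nth_less)

lemma rho_pt_kernel_diagonal: "rho_pt_kernel d c n x x = rho_pt_weight d c 0 0 ^ n"
  by (simp add: rho_pt_kernel_def rho_pt_weight_def)

lemma rho_pt_kernel_dominant:
  assumes "d \<ge> 3" "c < 1 / (real d * (real d - 1))"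
    and "x \<in> idx d n" "y \<in> idx d n" "x \<noteq> y"
  shows "\<bar>rho_pt_kernel d c n x y\<bar> < rho_pt_weight d c 0 0 ^ n"
proof -
  obtain k0 where "k0 < n" "x ! k0 \<noteq> y ! k0" using idx_neq_nth[OF assms(3-5)] by blast
  moreover have "\<bar>rho_pt_weight d c a a\<bar> \<le> rho_pt_weight d c 0 0" for a
    using rho_pt_weight_pos[OF assms(1,2), of 0] by (simp add: rho_pt_weight_def)
  ultimately show ?thesis
    unfolding rho_pt_kernel_def using rho_pt_weight_dominant[OF assms(1,2)]
    by (intro prod_nth_dominant_strict) auto
qed

lemma phi_comb_off_diagonal:
  assumes "x \<in> idx d n" "y \<in> idx d n" "x \<noteq> y"
  shows "phi_comb d n coef x y = 0"
proof -
  obtain k where "k < n" "x ! k \<noteq> y ! k" using idx_neq_nth[OF assms] by blast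
  then show ?thesis
    unfolding phi_comb_def by (intro sum.neutral ballI) (auto simp: Phi_def intro!: prod_zero)
qed

lemma apply_op_diagonal_vector:
  assumes "\<forall>x\<in>idx d n. \<forall>y\<in>idx d n. x \<noteq> y \<longrightarrow> v x y = 0" "x \<in> idx d n"
  shows "apply_op d n T v x x = (\<Sum>x'\<in>idx d n. T x x x' x' * v x' x')"
proof -
  have "apply_op d n T v x x = (\<Sum>x'\<in>idx d n. \<Sum>y'\<in>idx d n. if y' = x' then T x x x' x' * v x' x' else 0)"
    unfolding apply_op_def using assms(1) by (intro sum.cong refl) auto
  also have "\<dots> = (\<Sum>x'\<in>idx d n. T x x x' x' * v x' x')"
    using finite_idx by simp
  finally show ?thesis .
qed

lemma null_space_diagonal_equation:
  assumes "in_null_space d n (tpow_op n (ptrans (rho d c))) v"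
    and diag: "\<forall>x\<in>idx d n. \<forall>y\<in>idx d n. x \<noteq> y \<longrightarrow> v x y = 0" and "x \<in> idx d n"
  shows "(\<Sum>y\<in>idx d n. of_real (rho_pt_kernel d c n x y) * v y y) = 0"
proof -
  have "(\<Sum>y\<in>idx d n. of_real (rho_pt_kernel d c n x y) * v y y)
      = (\<Sum>y\<in>idx d n. tpow_op n (ptrans (rho d c)) x x y y * v y y)"
    using \<open>x \<in> idx d n\<close> by (intro sum.cong refl) (simp add: tpow_op_ptrans_rho_diagonal)
  also have "\<dots> = apply_op d n (tpow_op n (ptrans (rho d c))) v x x"
    using diag \<open>x \<in> idx d n\<close> by (rule apply_op_diagonal_vector[symmetric])
  also have "\<dots> = 0" using assms(1) \<open>x \<in> idx d n\<close> by (simp add: in_null_space_def)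
  finally show ?thesis .
qed

theorem lemma5:
  fixes d n :: nat and c :: real and coef :: "nat list \<Rightarrow> complex"
  assumes "d \<ge> 3" and "n \<ge> 1" and "0 \<le> c" and "c < 1 / (real d * (real d - 1))"
    and "nonzero_vec d n (phi_comb d n coef)"
    and "schmidt_rank d n (phi_comb d n coef) < 3"
  shows "\<not> in_null_space d n (tpow_op n (ptrans (rho d c))) (phi_comb d n coef)"
proof
  define v where "v = phi_comb d n coef"
  assume "in_null_space d n (tpow_op n (ptrans (rho d c))) (phi_comb d n coef)"
  then have null: "in_null_space d n (tpow_op n (ptrans (rho d c))) v" by (simp add: v_def)
  have diag: "\<forall>x\<in>idx d n. \<forall>y\<in>idx d n. x \<noteq> y \<longrightarrow> v x y = 0"
    by (simp add: v_def phi_comb_off_diagonal)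
  obtain p where p: "p \<in> idx d n" "v p p \<noteq> 0"
    using assms(5) diag unfolding nonzero_vec_def v_def by metis
  obtain u w where dec: "\<forall>x\<in>idx d n. \<forall>y\<in>idx d n. v x y = (\<Sum>m<schmidt_rank d n v. u m x * w m y)"
    using schmidt_rank_decomposition by blast
  have "v p p = 0"
  proof (rule dominant_system_sparse_solution_zero
      [where I = "idx d n" and K = "rho_pt_kernel d c n" and \<alpha> = "rho_pt_weight d c 0 0 ^ n"])
    show "\<forall>x\<in>idx d n. \<forall>y\<in>idx d n. x \<noteq> y \<longrightarrow> \<bar>rho_pt_kernel d c n x y\<bar> < rho_pt_weight d c 0 0 ^ n"
      using rho_pt_kernel_dominant[OF assms(1,4)] by blast
    show "\<forall>x\<in>idx d n. (\<Sum>y\<in>idx d n. of_real (rho_pt_kernel d c n x y) * v y y) = 0"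
      using null_space_diagonal_equation[OF null diag] by blast
    show "\<forall>x\<in>idx d n. \<forall>y\<in>idx d n. \<forall>z\<in>idx d n. x \<noteq> y \<and> x \<noteq> z \<and> y \<noteq> z \<longrightarrow> v x x * v y y * v z z = 0"
      using rank_two_diagonal_three_zero[OF dec _ diag] assms(6) by (simp add: v_def)
  qed (use finite_idx p rho_pt_weight_pos[OF assms(1,4)] in \<open>auto simp: rho_pt_kernel_diagonal\<close>)
  with p show False by simp
qed

end
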